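(* Let $X$ be a non-empty finite set and $\mathcal{P}=\{P_1,\ldots,P_n\}$ a partition of $X$ with $n\ge 2$ blocks, indexed so that $|P_i|\le|P_j|$ whenever $i<j$. Let $U\subseteq T(X,\mathcal{P})\setminus\Sigma(X,\mathcal{P})$ be such that $T(X,\mathcal{P})$ is generated (as a semigroup) by $\Sigma(X,\mathcal{P})\cup U$. Then for all distinct $i,j\in\{1,\ldots,n\}$ there exist $f\in U\cap\mathcal{A}$ and distinct $k,l\in\{1,\ldots,n\}$ such that $(k)\overline{f}=(l)\overline{f}$, $|P_i|=|P_k|$ and $|P_j|=|P_l|$.
   Context: Maps are written on the right and composed left to right. $T(X,\mathcal{P})$ is the semigroup of maps $f:X\to X$ such that each block of $\mathcal{P}$ is mapped into some block of $\mathcal{P}$; $\Sigma(X,\mathcal{P})$ is the set of $f\in T(X,\mathcal{P})$ whose image intersects every block of $\mathcal{P}$. For $f\in T(X,\mathcal{P})$, $\overline{f}:\{1,\ldots,n\}\to\{1,\ldots,n\}$ is defined by $(i)\overline{f}=j$ whenever $P_if\subseteq P_j$. $\mathcal{A}$ is the set of $f\in T(X,\mathcal{P})$ such that $f|_{P_i}$ is injective for every $i$ and $|\operatorname{im}(\overline{f})|=n-1$. *)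

theory Defs
  imports Main "HOL-Library.FuncSet"
begin

text \<open>Maps X -> X are represented as extensional functions (value undefined outside X). Maps act on the right, so the
product f g (first f, then g) is the function compose X g f.\<close>

definition is_partition :: "'a set \<Rightarrow> (nat \<Rightarrow> 'a set) \<Rightarrow> nat \<Rightarrow> bool" where
  "is_partition X P n \<longleftrightarrow>
     (\<forall>i\<in>{1..n}. P i \<noteq> {}) \<and>
     (\<forall>i\<in>{1..n}. \<forall>j\<in>{1..n}. i \<noteq> j \<longrightarrow> P i \<inter> P j = {}) \<and>
     (\<Union>i\<in>{1..n}. P i) = X"

definition TP :: "'a set \<Rightarrow> (nat \<Rightarrow> 'a set) \<Rightarrow> nat \<Rightarrow> ('a \<Rightarrow> 'a) set" where
  "TP X P n = {f \<in> X \<rightarrow>\<^sub>E X. \<forall>i\<in>{1..n}. \<exists>j\<in>{1..n}. f ` P i \<subseteq> P j}"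

definition SigmaP :: "'a set \<Rightarrow> (nat \<Rightarrow> 'a set) \<Rightarrow> nat \<Rightarrow> ('a \<Rightarrow> 'a) set" where
  "SigmaP X P n = {f \<in> TP X P n. \<forall>j\<in>{1..n}. f ` X \<inter> P j \<noteq> {}}"

definition fbar :: "(nat \<Rightarrow> 'a set) \<Rightarrow> nat \<Rightarrow> ('a \<Rightarrow> 'a) \<Rightarrow> nat \<Rightarrow> nat" where
  "fbar P n f i = (THE j. j \<in> {1..n} \<and> f ` P i \<subseteq> P j)"

definition AP :: "'a set \<Rightarrow> (nat \<Rightarrow> 'a set) \<Rightarrow> nat \<Rightarrow> ('a \<Rightarrow> 'a) set" where
  "AP X P n = {f \<in> TP X P n. (\<forall>i\<in>{1..n}. inj_on f (P i)) \<and>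
                 card (fbar P n f ` {1..n}) = n - 1}"

inductive_set sgen :: "'a set \<Rightarrow> ('a \<Rightarrow> 'a) set \<Rightarrow> ('a \<Rightarrow> 'a) set"
  for X :: "'a set" and S :: "('a \<Rightarrow> 'a) set" where
  base: "f \<in> S \<Longrightarrow> f \<in> sgen X S"
| mult: "f \<in> sgen X S \<Longrightarrow> g \<in> sgen X S \<Longrightarrow> compose X g f \<in> sgen X S"

end

theory Submission
  imports Defs
begin

text \<open>Let \<open>|P\<^sub>a| \<le> |P\<^sub>b|\<close> be the sizes of \<open>P\<^sub>i\<close> and \<open>P\<^sub>j\<close>. Choose \<open>g \<in> T(X,\<P>)\<close>, injective on
every block, that embeds \<open>P\<^sub>a\<close> into \<open>P\<^sub>b\<close> and fixes all other points; then \<open>fbar g\<close>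
identifies exactly \<open>a\<close> and \<open>b\<close>, so \<open>g \<notin> \<Sigma>(X,\<P>)\<close>. As \<open>\<Sigma>(X,\<P>)\<close> is a subsemigroup,
\<open>g = s u r\<close> with \<open>s \<in> \<Sigma>(X,\<P>)\<close>, \<open>u \<in> U\<close>, \<open>r \<in> T(X,\<P>)\<close>. Then \<open>s\<close> is injective on blocks
and \<open>fbar s\<close> is a permutation, so counting shows that \<open>s\<close> maps every block onto a block of the
same size; hence \<open>u\<close> is injective on blocks as well. Any pair identified by \<open>fbar u\<close> pulls
back under \<open>fbar s\<close> to \<open>{a, b}\<close>, so \<open>fbar u\<close> has image of size \<open>n - 1\<close>, i.e. \<open>u \<in> \<A>\<close>, and
the pair it identifies consists of blocks of the sizes of \<open>P\<^sub>a\<close> and \<open>P\<^sub>b\<close>.\<close>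

lemma identifies_exactly_one_pair:
  fixes \<sigma> \<tau> :: "'i \<Rightarrow> 'i"
  assumes "finite A" "bij_betw \<sigma> A A" "\<tau> ` A \<subset> A" "b \<in> A"
    and pullback: "\<And>m m'. m \<in> A \<Longrightarrow> m' \<in> A \<Longrightarrow> m \<noteq> m' \<Longrightarrow> \<tau> (\<sigma> m) = \<tau> (\<sigma> m') \<Longrightarrow>
      {m, m'} = {a, b}"
  shows "card (\<tau> ` A) = card A - 1" and "\<tau> (\<sigma> a) = \<tau> (\<sigma> b)"
proof -
  have inj: "inj_on (\<tau> \<circ> \<sigma>) (A - {b})"
  proof (rule inj_onI)
    fix m m' assume m: "m \<in> A - {b}" and m': "m' \<in> A - {b}" and "(\<tau> \<circ> \<sigma>) m = (\<tau> \<circ> \<sigma>) m'"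
    show "m = m'"
    proof (rule ccontr)
      assume "m \<noteq> m'"
      then have "{m, m'} = {a, b}" using pullback m m' \<open>(\<tau> \<circ> \<sigma>) m = _\<close> by simp
      then show False using m m' by (auto simp: doubleton_eq_iff)
    qed
  qed
  have "card A - 1 = card ((\<tau> \<circ> \<sigma>) ` (A - {b}))"
    using card_image[OF inj] card_Diff_singleton[OF assms(4)] by simp
  also have "\<dots> \<le> card ((\<tau> \<circ> \<sigma>) ` A)" using assms(1) by (intro card_mono) auto
  also have "(\<tau> \<circ> \<sigma>) ` A = \<tau> ` A"
    unfolding image_comp[symmetric] using bij_betw_imp_surj_on[OF assms(2)] by simp
  finally have "card A - 1 \<le> card (\<tau> ` A)" .
  moreover have card_less: "card (\<tau> ` A) < card A" using psubset_card_mono[OF assms(1,3)] .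
  ultimately show "card (\<tau> ` A) = card A - 1" by simp
  have "\<not> inj_on \<tau> A"
  proof
    assume "inj_on \<tau> A"
    then show False using card_less card_image[of \<tau> A] by simp
  qed
  then obtain x y where xy: "x \<in> A" "y \<in> A" "x \<noteq> y" "\<tau> x = \<tau> y" unfolding inj_on_def by blast
  have "x \<in> \<sigma> ` A" "y \<in> \<sigma> ` A" using bij_betw_imp_surj_on[OF assms(2)] xy(1,2) by simp_all
  then obtain m m' where m: "m \<in> A" "x = \<sigma> m" and m': "m' \<in> A" "y = \<sigma> m'" by blast
  then have "{m, m'} = {a, b}" using pullback[OF m(1) m'(1)] xy(3,4) by blast
  then have "m = a \<and> m' = b \<or> m = b \<and> m' = a" by (simp add: doubleton_eq_iff)
  then show "\<tau> (\<sigma> a) = \<tau> (\<sigma> b)" using xy(4) m(2) m'(2) by auto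
qed

locale block_partition =
  fixes X :: "'a set" and P :: "nat \<Rightarrow> 'a set" and n :: nat
  assumes partition: "is_partition X P n"
begin

lemma block_nonempty: "k \<in> {1..n} \<Longrightarrow> P k \<noteq> {}"
  using partition unfolding is_partition_def by blast

lemma block_subset: "k \<in> {1..n} \<Longrightarrow> P k \<subseteq> X"
  using partition unfolding is_partition_def by blast

lemma block_unique: "k \<in> {1..n} \<Longrightarrow> l \<in> {1..n} \<Longrightarrow> x \<in> P k \<Longrightarrow> x \<in> P l \<Longrightarrow> k = l"
  using partition unfolding is_partition_def by blast

lemma block_cover:
  assumes "x \<in> X"
  obtains k where "k \<in> {1..n}" "x \<in> P k"
  using assms partition unfolding is_partition_def by blast

lemma finite_block: "finite X \<Longrightarrow> k \<in> {1..n} \<Longrightarrow> finite (P k)"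
  using block_subset finite_subset by blast

lemma fbar_eqI:
  assumes "k \<in> {1..n}" "l \<in> {1..n}" "f ` P k \<subseteq> P l"
  shows "fbar P n f k = l"
  unfolding fbar_def
proof (rule the_equality)
  show "l \<in> {1..n} \<and> f ` P k \<subseteq> P l" using assms by blast
next
  fix l' assume "l' \<in> {1..n} \<and> f ` P k \<subseteq> P l'"
  moreover obtain x where "x \<in> P k" using block_nonempty[OF assms(1)] by blast
  ultimately show "l' = l" using assms block_unique by blast
qed

lemma fbar_in_blocks:
  assumes "f \<in> TP X P n" "k \<in> {1..n}"
  shows "fbar P n f k \<in> {1..n}" and "f ` P k \<subseteq> P (fbar P n f k)"
proof -
  obtain l where "l \<in> {1..n}" "f ` P k \<subseteq> P l" using assms unfolding TP_def by blast
  then show "fbar P n f k \<in> {1..n}" "f ` P k \<subseteq> P (fbar P n f k)"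
    using fbar_eqI[OF assms(2)] by simp_all
qed

lemma TP_mem_X: "f \<in> TP X P n \<Longrightarrow> x \<in> X \<Longrightarrow> f x \<in> X"
  unfolding TP_def by auto

lemma fbar_comp:
  assumes "f \<in> TP X P n" "g \<in> TP X P n" "k \<in> {1..n}" "\<forall>x\<in>X. h x = g (f x)"
  shows "fbar P n h k = fbar P n g (fbar P n f k)"
proof (rule fbar_eqI[OF assms(3)])
  note f = fbar_in_blocks[OF assms(1,3)]
  note g = fbar_in_blocks[OF assms(2) f(1)]
  show "fbar P n g (fbar P n f k) \<in> {1..n}" using g(1) .
  show "h ` P k \<subseteq> P (fbar P n g (fbar P n f k))"
    using assms(4) block_subset[OF assms(3)] f(2) g(2) by (auto simp: image_subset_iff)
qed

lemma TP_compose: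
  assumes "f \<in> TP X P n" "g \<in> TP X P n"
  shows "compose X g f \<in> TP X P n"
proof -
  have "f \<in> X \<rightarrow> X" "g \<in> X \<rightarrow> X" using assms unfolding TP_def by auto
  then have "compose X g f \<in> X \<rightarrow>\<^sub>E X"
    using funcset_compose compose_extensional by (simp add: PiE_iff Pi_iff)
  moreover have img: "compose X g f ` P k \<subseteq> P (fbar P n g (fbar P n f k))" if "k \<in> {1..n}" for k
  proof (rule image_subsetI)
    fix x assume x: "x \<in> P k"
    then have "f x \<in> P (fbar P n f k)" using fbar_in_blocks(2)[OF assms(1) that] by blast
    then have "g (f x) \<in> P (fbar P n g (fbar P n f k))"
      using fbar_in_blocks[OF assms(1) that] fbar_in_blocks(2)[OF assms(2)] by blast
    then show "compose X g f x \<in> P (fbar P n g (fbar P n f k))"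
      using x block_subset[OF that] by (auto simp: compose_eq)
  qed
  moreover have "\<forall>k\<in>{1..n}. \<exists>l\<in>{1..n}. compose X g f ` P k \<subseteq> P l"
    using img fbar_in_blocks(1)[OF assms(2) fbar_in_blocks(1)[OF assms(1)]] by blast
  ultimately show ?thesis unfolding TP_def by blast
qed

lemma fbar_factor:
  assumes "s \<in> TP X P n" "u \<in> TP X P n" "r \<in> TP X P n" "\<forall>x\<in>X. g x = r (u (s x))"
    and "k \<in> {1..n}"
  shows "fbar P n g k = fbar P n r (fbar P n u (fbar P n s k))"
proof -
  have "\<forall>x\<in>X. g x = r (compose X u s x)" using assms(4) by (simp add: compose_eq)
  then have "fbar P n g k = fbar P n r (fbar P n (compose X u s) k)"
    using fbar_comp[OF TP_compose[OF assms(1,2)] assms(3,5)] by blast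
  also have "fbar P n (compose X u s) k = fbar P n u (fbar P n s k)"
    using fbar_comp[OF assms(1,2,5)] by (simp add: compose_eq)
  finally show ?thesis .
qed

lemma SigmaP_iff_fbar_surj:
  assumes "f \<in> TP X P n"
  shows "f \<in> SigmaP X P n \<longleftrightarrow> fbar P n f ` {1..n} = {1..n}"
proof
  assume f: "f \<in> SigmaP X P n"
  show "fbar P n f ` {1..n} = {1..n}"
  proof
    show "fbar P n f ` {1..n} \<subseteq> {1..n}" using fbar_in_blocks(1)[OF assms] by blast
    show "{1..n} \<subseteq> fbar P n f ` {1..n}"
    proof
      fix l assume l: "l \<in> {1..n}"
      have "f ` X \<inter> P l \<noteq> {}" using f l unfolding SigmaP_def by blast
      then obtain x where x: "x \<in> X" "f x \<in> P l" by blast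
      obtain k where k: "k \<in> {1..n}" "x \<in> P k" using block_cover[OF x(1)] by blast
      have "f x \<in> P (fbar P n f k)" using fbar_in_blocks(2)[OF assms k(1)] k(2) by blast
      then have "fbar P n f k = l"
        using block_unique[OF fbar_in_blocks(1)[OF assms k(1)] l] x(2) by blast
      then show "l \<in> fbar P n f ` {1..n}" using k(1) by blast
    qed
  qed
next
  assume surj: "fbar P n f ` {1..n} = {1..n}"
  have "f ` X \<inter> P l \<noteq> {}" if "l \<in> {1..n}" for l
  proof -
    have "l \<in> fbar P n f ` {1..n}" using surj that by simp
    then obtain k where k: "k \<in> {1..n}" "l = fbar P n f k" by blast
    obtain x where x: "x \<in> P k" using block_nonempty[OF k(1)] by blast
    then have "f x \<in> P l" using fbar_in_blocks(2)[OF assms k(1)] k(2) by blast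
    moreover have "x \<in> X" using x block_subset[OF k(1)] by blast
    ultimately show ?thesis by blast
  qed
  then show "f \<in> SigmaP X P n" using assms unfolding SigmaP_def by blast
qed

lemma SigmaP_fbar_bij:
  assumes "f \<in> SigmaP X P n"
  shows "bij_betw (fbar P n f) {1..n} {1..n}"
proof -
  have "f \<in> TP X P n" using assms unfolding SigmaP_def by blast
  then have surj: "fbar P n f ` {1..n} = {1..n}" using SigmaP_iff_fbar_surj assms by blast
  moreover have "card (fbar P n f ` {1..n}) = card {1..n}" by (simp only: surj)
  then have "inj_on (fbar P n f) {1..n}" by (rule eq_card_imp_inj_on[rotated]) simp
  ultimately show ?thesis by (simp add: bij_betw_def)
qed

lemma SigmaP_compose:
  assumes "f \<in> SigmaP X P n" "g \<in> SigmaP X P n"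
  shows "compose X g f \<in> SigmaP X P n"
proof -
  have f: "f \<in> TP X P n" and g: "g \<in> TP X P n" using assms unfolding SigmaP_def by auto
  have "\<forall>x\<in>X. compose X g f x = g (f x)" by (simp add: compose_eq)
  then have "fbar P n (compose X g f) k = fbar P n g (fbar P n f k)" if "k \<in> {1..n}" for k
    using fbar_comp[OF f g that] by blast
  then have "fbar P n (compose X g f) ` {1..n} = fbar P n g ` fbar P n f ` {1..n}"
    unfolding image_image by (rule image_cong[OF refl])
  also have "\<dots> = {1..n}"
    using assms SigmaP_iff_fbar_surj[OF f] SigmaP_iff_fbar_surj[OF g] by simp
  finally show ?thesis using SigmaP_iff_fbar_surj[OF TP_compose[OF f g]] by blast
qed

lemma restrict_id_SigmaP: "restrict id X \<in> SigmaP X P n"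
proof -
  have "restrict id X ` P k = P k" if "k \<in> {1..n}" for k
    using block_subset[OF that] by auto
  moreover have "restrict id X \<in> X \<rightarrow>\<^sub>E X" by auto
  ultimately have "restrict id X \<in> TP X P n" unfolding TP_def by auto
  moreover have "restrict id X ` X \<inter> P l \<noteq> {}" if "l \<in> {1..n}" for l
    using block_subset[OF that] block_nonempty[OF that] by auto
  ultimately show ?thesis unfolding SigmaP_def by blast
qed

lemma sgen_subset_TP:
  assumes "S \<subseteq> TP X P n"
  shows "sgen X S \<subseteq> TP X P n"
proof
  fix h assume "h \<in> sgen X S"
  then show "h \<in> TP X P n" using assms
    by (induction rule: sgen.induct) (auto intro: TP_compose)
qed

lemma sgen_factor_through:
  assumes "U \<subseteq> TP X P n" "h \<in> sgen X (SigmaP X P n \<union> U)"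
  shows "h \<in> SigmaP X P n \<or>
    (\<exists>u\<in>U. \<exists>s\<in>SigmaP X P n. \<exists>r\<in>TP X P n. \<forall>x\<in>X. h x = r (u (s x)))"
  using assms(2)
proof (induction rule: sgen.induct)
  case (base f)
  moreover have "\<forall>x\<in>X. f x = restrict id X (f (restrict id X x))" if "f \<in> U"
    using that assms(1) TP_mem_X by auto
  ultimately show ?case
    using restrict_id_SigmaP unfolding SigmaP_def by blast
next
  case (mult f g)
  have "sgen X (SigmaP X P n \<union> U) \<subseteq> TP X P n"
    using assms(1) by (intro sgen_subset_TP) (auto simp: SigmaP_def)
  then have f: "f \<in> TP X P n" and g: "g \<in> TP X P n" using mult.hyps by auto
  from mult.IH(1) show ?case
  proof
    assume fS: "f \<in> SigmaP X P n"
    from mult.IH(2) show ?case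
    proof
      assume "\<exists>u\<in>U. \<exists>s\<in>SigmaP X P n. \<exists>r\<in>TP X P n. \<forall>x\<in>X. g x = r (u (s x))"
      then obtain u s r where "u \<in> U" "s \<in> SigmaP X P n" "r \<in> TP X P n"
        "\<forall>x\<in>X. g x = r (u (s x))" by blast
      moreover have "compose X s f \<in> SigmaP X P n" using SigmaP_compose fS \<open>s \<in> _\<close> by blast
      moreover have "\<forall>x\<in>X. compose X g f x = r (u (compose X s f x))"
        using \<open>\<forall>x\<in>X. g x = _\<close> TP_mem_X[OF f] by (simp add: compose_def)
      ultimately show ?case by blast
    qed (use SigmaP_compose fS in blast)
  next
    assume "\<exists>u\<in>U. \<exists>s\<in>SigmaP X P n. \<exists>r\<in>TP X P n. \<forall>x\<in>X. f x = r (u (s x))"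
    then obtain u s r where usr: "u \<in> U" "s \<in> SigmaP X P n" "r \<in> TP X P n"
      "\<forall>x\<in>X. f x = r (u (s x))" by blast
    have "u x \<in> X" "s x \<in> X" if "x \<in> X" for x
      using TP_mem_X[OF _ that] usr(1,2) assms(1) unfolding SigmaP_def by auto
    then have "\<forall>x\<in>X. compose X g f x = compose X g r (u (s x))"
      using usr(4) by (simp add: compose_def)
    then show ?case using usr TP_compose[OF usr(3) g] by blast
  qed
qed

text \<open>Since \<open>fbar s\<close> is a permutation, \<open>\<Sum>\<^sub>k |P\<^sub>k| = \<Sum>\<^sub>k |P\<^bsub>fbar s k\<^esub>|\<close>, so none of the
inequalities \<open>|P\<^sub>k| = |s ` P\<^sub>k| \<le> |P\<^bsub>fbar s k\<^esub>|\<close> is strict.\<close>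

lemma SigmaP_inj_blocks_image_eq:
  assumes "finite X" "s \<in> SigmaP X P n" "\<forall>k\<in>{1..n}. inj_on s (P k)" "k \<in> {1..n}"
  shows "s ` P k = P (fbar P n s k)"
proof -
  let ?\<sigma> = "fbar P n s"
  have s: "s \<in> TP X P n" using assms(2) unfolding SigmaP_def by blast
  have le: "card (P m) \<le> card (P (?\<sigma> m))" if "m \<in> {1..n}" for m
  proof -
    have "card (P m) = card (s ` P m)" using card_image assms(3) that by metis
    also have "\<dots> \<le> card (P (?\<sigma> m))"
      using card_mono[OF finite_block[OF assms(1)]] fbar_in_blocks[OF s that] by blast
    finally show ?thesis .
  qed
  have "(\<Sum>m\<in>{1..n}. card (P m)) = (\<Sum>m\<in>{1..n}. card (P (?\<sigma> m)))"
    using sum.reindex_bij_betw[OF SigmaP_fbar_bij[OF assms(2)], of "\<lambda>m. card (P m)"] by simp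
  then have "card (P k) = card (P (?\<sigma> k))"
    using sum_mono_inv[OF _ le assms(4)] by simp
  also have "card (P k) = card (s ` P k)" using card_image assms(3,4) by metis
  finally show ?thesis
    using card_subset_eq[OF finite_block[OF assms(1)]] fbar_in_blocks[OF s assms(4)] by blast
qed

lemma factor_inj_blocks:
  assumes "finite X" "s \<in> SigmaP X P n" "\<forall>x\<in>X. g x = r (u (s x))"
    and g_inj: "\<forall>k\<in>{1..n}. inj_on g (P k)"
  shows "\<forall>k\<in>{1..n}. inj_on s (P k)" and "\<forall>k\<in>{1..n}. inj_on u (P k)"
proof -
  have "inj_on ((r \<circ> u) \<circ> s) (P m)" if "m \<in> {1..n}" for m
  proof -
    have "g x = ((r \<circ> u) \<circ> s) x" if "x \<in> P m" for x
      using assms(3) block_subset[OF \<open>m \<in> _\<close>] that by auto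
    then show ?thesis using inj_on_cong[of "P m" g] g_inj \<open>m \<in> _\<close> by blast
  qed
  then have s_inj: "inj_on s (P m)" and ru_inj: "inj_on (r \<circ> u) (s ` P m)" if "m \<in> {1..n}" for m
    using that inj_on_imageI2 inj_on_imageI by blast+
  then show "\<forall>k\<in>{1..n}. inj_on s (P k)" by blast
  show "\<forall>k\<in>{1..n}. inj_on u (P k)"
  proof
    fix l assume "l \<in> {1..n}"
    then have "l \<in> fbar P n s ` {1..n}"
      using SigmaP_fbar_bij[OF assms(2)] by (simp add: bij_betw_def)
    then obtain k where k: "k \<in> {1..n}" "l = fbar P n s k" by blast
    then have "s ` P k = P l"
      using SigmaP_inj_blocks_image_eq[OF assms(1,2)] s_inj by blast
    then show "inj_on u (P l)"
      using ru_inj[OF k(1)] inj_on_imageI2 by metis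
  qed
qed

lemma merging_map_exists:
  assumes "finite X" "a \<in> {1..n}" "b \<in> {1..n}" "a \<noteq> b" "card (P a) \<le> card (P b)"
  obtains g where "g \<in> TP X P n" "\<forall>k\<in>{1..n}. inj_on g (P k)"
    "fbar P n g a = fbar P n g b"
    "\<And>m m'. m \<in> {1..n} \<Longrightarrow> m' \<in> {1..n} \<Longrightarrow> m \<noteq> m' \<Longrightarrow> fbar P n g m = fbar P n g m' \<Longrightarrow>
       {m, m'} = {a, b}"
proof -
  obtain e where e: "e \<in> P a \<rightarrow> P b" "inj_on e (P a)"
    using card_le_inj[OF finite_block[OF assms(1,2)] finite_block[OF assms(1,3)] assms(5)] by blast
  define g where "g x = (if x \<in> P a then e x else if x \<in> X then x else undefined)" for x
  have a_image: "g ` P a \<subseteq> P b" and a_inj: "inj_on g (P a)"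
    using e by (auto simp: g_def inj_on_def)
  have fixes_off_a: "g x = x" if "m \<in> {1..n}" "m \<noteq> a" "x \<in> P m" for m x
    using block_unique[OF that(1) assms(2) that(3)] block_subset[OF that(1)] that
    by (auto simp: g_def)
  have off_image: "g ` P m = P m" and off_inj: "inj_on g (P m)" if "m \<in> {1..n}" "m \<noteq> a" for m
  proof -
    have "g ` P m = (\<lambda>x. x) ` P m" by (rule image_cong[OF refl fixes_off_a[OF that]])
    then show "g ` P m = P m" by simp
    have "inj_on g (P m) = inj_on (\<lambda>x. x) (P m)" by (rule inj_on_cong[OF fixes_off_a[OF that]])
    then show "inj_on g (P m)" by simp
  qed
  have fbar_a: "fbar P n g a = b" using fbar_eqI[OF assms(2,3) a_image] .
  have fbar_off: "fbar P n g m = m" if "m \<in> {1..n}" "m \<noteq> a" for m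
    using fbar_eqI[OF that(1) that(1)] off_image[OF that] by blast
  have "g \<in> X \<rightarrow>\<^sub>E X"
    using a_image block_subset[OF assms(2)] block_subset[OF assms(3)]
    by (auto simp: g_def image_subset_iff subset_iff)
  moreover have "\<exists>l\<in>{1..n}. g ` P k \<subseteq> P l" if "k \<in> {1..n}" for k
    using a_image off_image[OF that] that assms(3) by (cases "k = a") blast+
  ultimately have "g \<in> TP X P n" unfolding TP_def by blast
  then show ?thesis
  proof (rule that)
    show "\<forall>k\<in>{1..n}. inj_on g (P k)"
      using a_inj off_inj by blast
    show "fbar P n g a = fbar P n g b" using fbar_a fbar_off[OF assms(3)] assms(4) by simp
    show "{m, m'} = {a, b}"
      if "m \<in> {1..n}" "m' \<in> {1..n}" "m \<noteq> m'" "fbar P n g m = fbar P n g m'" for m m'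
      using that fbar_a fbar_off assms(4) by (cases "m = a"; cases "m' = a") auto
  qed
qed

lemma merging_factor_in_AP:
  assumes "finite X" "U \<subseteq> TP X P n - SigmaP X P n"
    and "sgen X (SigmaP X P n \<union> U) = TP X P n"
    and "a \<in> {1..n}" "b \<in> {1..n}" "a \<noteq> b" "card (P a) \<le> card (P b)"
  shows "\<exists>u\<in>U \<inter> AP X P n. \<exists>k\<in>{1..n}. \<exists>l\<in>{1..n}. k \<noteq> l \<and>
    fbar P n u k = fbar P n u l \<and> card (P a) = card (P k) \<and> card (P b) = card (P l)"
proof -
  obtain g where g: "g \<in> TP X P n" "\<forall>k\<in>{1..n}. inj_on g (P k)" "fbar P n g a = fbar P n g b"
    and merges: "\<And>m m'. m \<in> {1..n} \<Longrightarrow> m' \<in> {1..n} \<Longrightarrow> m \<noteq> m' \<Longrightarrow>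
       fbar P n g m = fbar P n g m' \<Longrightarrow> {m, m'} = {a, b}"
    using merging_map_exists[OF assms(1,4-7)] by blast
  have "\<not> inj_on (fbar P n g) {1..n}" using g(3) assms(4-6) unfolding inj_on_def by blast
  then have "g \<notin> SigmaP X P n" using SigmaP_fbar_bij unfolding bij_betw_def by blast
  then obtain u s r where u: "u \<in> U" and s: "s \<in> SigmaP X P n" and r: "r \<in> TP X P n"
      and g_eq: "\<forall>x\<in>X. g x = r (u (s x))"
    using sgen_factor_through[of U g] assms(2,3) g(1) by blast
  have sT: "s \<in> TP X P n" using s unfolding SigmaP_def by blast
  have uT: "u \<in> TP X P n" and u_notin: "u \<notin> SigmaP X P n" using u assms(2) by auto
  let ?\<sigma> = "fbar P n s" and ?\<tau> = "fbar P n u"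
  have \<sigma>: "bij_betw ?\<sigma> {1..n} {1..n}" using SigmaP_fbar_bij[OF s] .
  have "?\<tau> ` {1..n} \<subset> {1..n}"
    using fbar_in_blocks(1)[OF uT] SigmaP_iff_fbar_surj[OF uT] u_notin by blast
  moreover have "{m, m'} = {a, b}"
    if "m \<in> {1..n}" "m' \<in> {1..n}" "m \<noteq> m'" "?\<tau> (?\<sigma> m) = ?\<tau> (?\<sigma> m')" for m m'
    using merges[OF that(1-3)] that(4) fbar_factor[OF sT uT r g_eq] that(1,2) by simp
  ultimately have card_\<tau>: "card (?\<tau> ` {1..n}) = n - 1" and \<tau>\<sigma>: "?\<tau> (?\<sigma> a) = ?\<tau> (?\<sigma> b)"
    using identifies_exactly_one_pair[OF _ \<sigma> _ assms(5)] by simp_all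
  note inj_blocks = factor_inj_blocks[of s g r u, OF assms(1) s g_eq g(2)]
  have "u \<in> AP X P n" using uT inj_blocks(2) card_\<tau> unfolding AP_def by blast
  moreover have "card (P k) = card (P (?\<sigma> k))" if "k \<in> {1..n}" for k
    using SigmaP_inj_blocks_image_eq[OF assms(1) s inj_blocks(1) that]
      card_image inj_blocks(1) that by metis
  moreover have "?\<sigma> a \<noteq> ?\<sigma> b" "?\<sigma> a \<in> {1..n}" "?\<sigma> b \<in> {1..n}"
    using \<sigma> assms(4-6) unfolding bij_betw_def inj_on_def by blast+
  ultimately show ?thesis using u \<tau>\<sigma> assms(4,5) by blast
qed

end

theorem lemma3p2:
  fixes X :: "'a set" and P :: "nat \<Rightarrow> 'a set" and n :: nat and U :: "('a \<Rightarrow> 'a) set"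
  assumes "finite X" and "X \<noteq> {}"
    and "is_partition X P n" and "n \<ge> 2"
    and "\<forall>i\<in>{1..n}. \<forall>j\<in>{1..n}. i < j \<longrightarrow> card (P i) \<le> card (P j)"
    and "U \<subseteq> TP X P n - SigmaP X P n"
    and "sgen X (SigmaP X P n \<union> U) = TP X P n"
  shows "\<forall>i\<in>{1..n}. \<forall>j\<in>{1..n}. i \<noteq> j \<longrightarrow>
           (\<exists>f\<in>U \<inter> AP X P n. \<exists>k\<in>{1..n}. \<exists>l\<in>{1..n}. k \<noteq> l \<and>
              fbar P n f k = fbar P n f l \<and> card (P i) = card (P k) \<and> card (P j) = card (P l))"
proof (intro ballI impI)
  interpret block_partition X P n using assms(3) by unfold_locales
  fix i j assume ij: "i \<in> {1..n}" "j \<in> {1..n}" "i \<noteq> j"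
  show "\<exists>f\<in>U \<inter> AP X P n. \<exists>k\<in>{1..n}. \<exists>l\<in>{1..n}. k \<noteq> l \<and>
          fbar P n f k = fbar P n f l \<and> card (P i) = card (P k) \<and> card (P j) = card (P l)"
  proof (cases "card (P i) \<le> card (P j)")
    case True
    then show ?thesis using merging_factor_in_AP assms(1,6,7) ij by blast
  next
    case False
    then have "card (P j) \<le> card (P i)" by simp
    then show ?thesis using merging_factor_in_AP[of U j i] assms(1,6,7) ij by metis
  qed
qed

end
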